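(* Consider $N$ nodes, nodes $1,\dots,N_1$ Byzantine and nodes $N_1+1,\dots,N$ honest. For each node $i$, let $M$ be a positive integer, $\sigma_i>0$, $\eta_i\ge0$, and let $Y_i$ be such that $Y_i/\sigma_i^2$ is central chi-square with $M$ degrees of freedom under $H_0$ and non-central chi-square with $M$ degrees of freedom and non-centrality parameter $\eta_i$ under $H_1$. Each Byzantine node $i\le N_1$ reports $\tilde Y_i=Y_i+\Delta_i$ (under $H_0$) or $\tilde Y_i=Y_i-\Delta_i$ (under $H_1$) with probability $P_i\in[0,1]$, and $\tilde Y_i=Y_i$ with probability $1-P_i$; all $Y_i$ and attack decisions are mutually independent. For real coefficients $\delta_1,\dots,\delta_N$ with $\sum_{i=1}^N\delta_i=1$, consider $\Lambda_\delta=\sum_{i=1}^{N_1}\delta_i\tilde Y_i+\sum_{i=N_1+1}^N\delta_iY_i$ and its deflection coefficient $\mathcal D(\Lambda_\delta)=(\mu_1-\mu_0)^2/\sigma_{(0)}^2$. Define $$w_i^B=\frac{\eta_i\sigma_i^2-2P_i\Delta_i}{\Delta_i^2P_i(1-P_i)+2M\sigma_i^4}\ (i\le N_1),\qquad w_i^H=\frac{\eta_i}{2M\sigma_i^2}\ (i>N_1),$$ and assume $S=\sum_{i=1}^{N_1}w_i^B+\sum_{i=N_1+1}^Nw_i^H\ne0$. Then the choice $\delta_i^B=w_i^B/S$ for $i\le N_1$ and $\delta_i^H=w_i^H/S$ for $i>N_1$ maximizes $\mathcal D(\Lambda_\delta)$ over all $\delta$ with $\sum_i\delta_i=1$.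
   Context: $\mu_k=\mathbb E[\Lambda_\delta\mid H_k]$ for $k=0,1$, and $\sigma_{(0)}^2=\mathbb E[(\Lambda_\delta-\mu_0)^2\mid H_0]$. *)

theory Defs
  imports "HOL-Probability.Probability"
begin

definition chi2_density :: "nat \<Rightarrow> real \<Rightarrow> real" where
  "chi2_density k x =
     (if x > 0 then x powr (real k / 2 - 1) * exp (- x / 2) / (2 powr (real k / 2) * Gamma (real k / 2))
      else 0)"

definition ncchi2_density :: "nat \<Rightarrow> real \<Rightarrow> real \<Rightarrow> real" where
  "ncchi2_density k eta x =
     (\<Sum>j. exp (- eta / 2) * (eta / 2) ^ j / fact j * chi2_density (k + 2 * j) x)"

text \<open>Deflection coefficient (mu1 - mu0)^2 / sigma0^2, where L0 is the statistic under H0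
  (probability space M0) and L1 the statistic under H1 (probability space M1).\<close>
definition deflection :: "'a measure \<Rightarrow> 'a measure \<Rightarrow> ('a \<Rightarrow> real) \<Rightarrow> ('a \<Rightarrow> real) \<Rightarrow> real" where
  "deflection M0 M1 L0 L1 =
     (let mu0 = integral\<^sup>L M0 L0; mu1 = integral\<^sup>L M1 L1;
          var0 = integral\<^sup>L M0 (\<lambda>x. (L0 x - mu0)^2)
      in (mu1 - mu0)^2 / var0)"

text \<open>The fusion statistic Lambda_delta under H0 (reports Y_i + Delta_i B_i) and
  under H1 (reports Y_i - Delta_i B_i); B_i is the 0/1 attack indicator.\<close>
definition Lambda0 :: "nat \<Rightarrow> nat \<Rightarrow> (nat \<Rightarrow> real) \<Rightarrow> (nat \<Rightarrow> 'a \<Rightarrow> real) \<Rightarrow> (nat \<Rightarrow> 'a \<Rightarrow> real)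
    \<Rightarrow> (nat \<Rightarrow> real) \<Rightarrow> 'a \<Rightarrow> real" where
  "Lambda0 N N1 Delta Y B \<delta> \<omega> =
     (\<Sum>i=1..N1. \<delta> i * (Y i \<omega> + Delta i * B i \<omega>)) + (\<Sum>i=N1+1..N. \<delta> i * Y i \<omega>)"

definition Lambda1 :: "nat \<Rightarrow> nat \<Rightarrow> (nat \<Rightarrow> real) \<Rightarrow> (nat \<Rightarrow> 'a \<Rightarrow> real) \<Rightarrow> (nat \<Rightarrow> 'a \<Rightarrow> real)
    \<Rightarrow> (nat \<Rightarrow> real) \<Rightarrow> 'a \<Rightarrow> real" where
  "Lambda1 N N1 Delta Y B \<delta> \<omega> =
     (\<Sum>i=1..N1. \<delta> i * (Y i \<omega> - Delta i * B i \<omega>)) + (\<Sum>i=N1+1..N. \<delta> i * Y i \<omega>)"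

end

theory Submission
  imports Defs
begin

text \<open>Under either hypothesis the fused statistic is a linear combination of the independent
  observations \<open>Y\<^sub>i\<close> and attack indicators \<open>B\<^sub>i\<close>, whose first two moments are explicit:
  \<open>Y\<^sub>i/\<sigma>\<^sub>i\<^sup>2\<close> has mean \<open>M\<close> and variance \<open>2M\<close> under \<open>H\<^sub>0\<close> and mean \<open>M + \<eta>\<^sub>i\<close> under \<open>H\<^sub>1\<close>
  (the non-central density being a Poisson mixture of central ones), and \<open>B\<^sub>i\<close> is Bernoulli
  with parameter \<open>P\<^sub>i\<close>. Hence \<open>\<mu>\<^sub>1 - \<mu>\<^sub>0 = \<Sum> \<delta>\<^sub>i a\<^sub>i\<close> and \<open>\<sigma>\<^sub>(\<^sub>0\<^sub>)\<^sup>2 = \<Sum> \<delta>\<^sub>i\<^sup>2 v\<^sub>i\<close>, where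
  \<open>a\<^sub>i = \<eta>\<^sub>i\<sigma>\<^sub>i\<^sup>2 - 2P\<^sub>i\<Delta>\<^sub>i\<close> and \<open>v\<^sub>i = \<Delta>\<^sub>i\<^sup>2P\<^sub>i(1 - P\<^sub>i) + 2M\<sigma>\<^sub>i\<^sup>4\<close> for Byzantine nodes, and
  \<open>a\<^sub>i = \<eta>\<^sub>i\<sigma>\<^sub>i\<^sup>2\<close>, \<open>v\<^sub>i = 2M\<sigma>\<^sub>i\<^sup>4\<close> for honest ones. By Cauchy--Schwarz,
  \<open>(\<Sum> \<delta>\<^sub>i a\<^sub>i)\<^sup>2 \<le> (\<Sum> \<delta>\<^sub>i\<^sup>2 v\<^sub>i)(\<Sum> a\<^sub>i\<^sup>2/v\<^sub>i)\<close>, with equality for \<open>\<delta>\<close> proportional to \<open>a/v\<close>,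
  which is the claimed choice \<open>w/S\<close>.\<close>

section \<open>Moments of the central chi-square distribution\<close>

lemma nn_integral_powr_exp_half:
  fixes s :: real
  assumes s: "s > 0"
  shows "(\<integral>\<^sup>+x. ennreal (indicator {0<..} x * x powr (s - 1) * exp (- x / 2)) \<partial>lborel)
    = ennreal (2 powr s * Gamma s)"
proof -
  let ?h = "\<lambda>x::real. ennreal (indicator {0<..} x * x powr (s - 1) * exp (- x / 2))"
  have "?h \<in> borel_measurable borel" by measurable
  then have "(\<integral>\<^sup>+x. ?h x \<partial>lborel) = 2 * (\<integral>\<^sup>+x. ?h (2 * x) \<partial>lborel)"
    using nn_integral_real_affine[of ?h 2 0] by simp
  also have "(\<lambda>x. ?h (2 * x))
      = (\<lambda>x. ennreal (2 powr (s - 1)) * ennreal (indicator {0..} x * x powr (s - 1) / exp x))"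
  proof
    fix x :: real
    show "?h (2 * x) = ennreal (2 powr (s - 1)) * ennreal (indicator {0..} x * x powr (s - 1) / exp x)"
      by (cases x "0::real" rule: linorder_cases)
        (auto simp: powr_mult exp_minus field_simps ennreal_mult[symmetric] indicator_def)
  qed
  also have "(\<integral>\<^sup>+x. ennreal (2 powr (s - 1)) * ennreal (indicator {0..} x * x powr (s - 1) / exp x) \<partial>lborel)
      = ennreal (2 powr (s - 1)) * Gamma s"
    by (subst nn_integral_cmult) (auto simp: Gamma_conv_nn_integral_real[OF s])
  also have "2 * (ennreal (2 powr (s - 1)) * ennreal (Gamma s)) = ennreal (2 * (2 powr (s - 1) * Gamma s))"
    using s by (simp add: ennreal_mult Gamma_real_pos)
  also have "2 * (2 powr (s - 1) * Gamma s) = 2 powr s * Gamma s"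
    by (simp add: powr_diff)
  finally show ?thesis .
qed

lemma chi2_density_nonneg: "0 \<le> chi2_density k x"
proof (cases "k = 0")
  case False
  then show ?thesis
    unfolding chi2_density_def by (auto intro!: divide_nonneg_pos mult_pos_pos Gamma_real_pos)
qed (simp add: chi2_density_def)

lemma chi2_density_mult_nonneg: "0 \<le> chi2_density k x * x"
proof (cases "x > 0")
  case True
  then show ?thesis using chi2_density_nonneg[of k x] by simp
qed (simp add: chi2_density_def)

lemma Gamma_half_nat_pos: "k > 0 \<Longrightarrow> Gamma (real k / 2) > 0"
  by (simp add: Gamma_real_pos)

lemma borel_measurable_chi2_density [measurable]: "chi2_density k \<in> borel_measurable borel"
  unfolding chi2_density_def by measurable

lemma Gamma_half_nat_plus1:
  assumes "k > 0"
  shows "Gamma (real k / 2 + 1) = real k / 2 * Gamma (real k / 2)"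
proof -
  have "real k / 2 \<notin> \<int>\<^sub>\<le>\<^sub>0" using assms nonpos_Ints_nonpos[of "real k / 2"] by auto
  then show ?thesis by (simp add: Gamma_plus1)
qed

lemma nn_integral_chi2_moment:
  assumes k: "k > 0"
  shows "(\<integral>\<^sup>+x. ennreal (chi2_density k x * x ^ n) \<partial>lborel)
    = ennreal (2 ^ n * Gamma (real k / 2 + n) / Gamma (real k / 2))"
proof -
  define a where "a = real k / 2"
  have a: "a > 0" using k by (simp add: a_def)
  have C: "2 powr a * Gamma a > 0" using a by (simp add: Gamma_real_pos)
  have density: "ennreal (chi2_density k x * x ^ n) = ennreal (1 / (2 powr a * Gamma a)) *
      ennreal (indicator {0<..} x * x powr (a + real n - 1) * exp (- x / 2))" for x
  proof (cases "x > 0")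
    case True
    then have "x powr (a + real n - 1) = x powr (a - 1) * x ^ n"
      by (simp add: powr_add[symmetric] powr_realpow[symmetric] algebra_simps)
    then show ?thesis using True C
      by (simp add: chi2_density_def a_def ennreal_mult[symmetric] indicator_def field_simps)
  qed (simp add: chi2_density_def indicator_def)
  have "(\<integral>\<^sup>+x. ennreal (chi2_density k x * x ^ n) \<partial>lborel) =
      ennreal (1 / (2 powr a * Gamma a)) * ennreal (2 powr (a + real n) * Gamma (a + real n))"
    unfolding density using a nn_integral_powr_exp_half[of "a + real n"]
    by (subst nn_integral_cmult) simp_all
  also have "\<dots> = ennreal (2 ^ n * Gamma (a + n) / Gamma a)"
    using C a by (simp add: ennreal_mult[symmetric] Gamma_real_pos powr_add powr_realpow field_simps)
  finally show ?thesis by (simp add: a_def)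
qed

lemma has_bochner_integral_chi2_moment:
  assumes "k > 0"
  shows "has_bochner_integral lborel (\<lambda>x. chi2_density k x * x ^ n)
    (2 ^ n * Gamma (real k / 2 + n) / Gamma (real k / 2))"
  using assms nn_integral_chi2_moment[OF assms, of n]
  by (intro has_bochner_integral_nn_integral)
    (auto intro!: AE_I2 mult_nonneg_nonneg Gamma_real_pos less_imp_le simp: chi2_density_def)

lemma chi2_mean:
  assumes "k > 0"
  shows "has_bochner_integral lborel (\<lambda>x. chi2_density k x * x) (real k)"
proof -
  have "2 ^ 1 * Gamma (real k / 2 + 1) / Gamma (real k / 2) = real k"
    unfolding Gamma_half_nat_plus1[OF assms] using Gamma_half_nat_pos[OF assms] by simp
  then show ?thesis using has_bochner_integral_chi2_moment[OF assms, of 1] by simp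
qed

lemma chi2_second_moment:
  assumes "k > 0"
  shows "has_bochner_integral lborel (\<lambda>x. chi2_density k x * x ^ 2) (real k * (real k + 2))"
proof -
  have "Gamma (real k / 2 + 2) = (real k / 2 + 1) * (real k / 2 * Gamma (real k / 2))"
    using Gamma_plus1[of "real k / 2 + 1"] nonpos_Ints_nonpos[of "real k / 2 + 1"]
    by (force simp: add.assoc Gamma_half_nat_plus1[OF assms])
  then have "2 ^ 2 * Gamma (real k / 2 + 2) / Gamma (real k / 2) = real k * (real k + 2)"
    using Gamma_half_nat_pos[OF assms] by (simp add: field_simps)
  then show ?thesis using has_bochner_integral_chi2_moment[OF assms, of 2] by simp
qed

lemma chi2_density_add_two:
  assumes k: "k > 0" and x: "x > 0"
  shows "chi2_density (k + 2) x = chi2_density k x * x / real k"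
proof -
  have half: "real (k + 2) / 2 = real k / 2 + 1" by simp
  have "x powr (real k / 2 + 1 - 1) = x powr (real k / 2 - 1) * x"
    using x by (simp add: powr_diff)
  then show ?thesis using x k Gamma_half_nat_pos[OF k]
    unfolding chi2_density_def half Gamma_half_nat_plus1[OF k] powr_add by (simp add: field_simps)
qed

section \<open>The non-central chi-square distribution as a Poisson mixture\<close>

definition poisson_weight :: "real \<Rightarrow> nat \<Rightarrow> real" where
  "poisson_weight r j = exp (- r) * r ^ j / fact j"

lemma poisson_weight_nonneg: "r \<ge> 0 \<Longrightarrow> poisson_weight r j \<ge> 0"
  unfolding poisson_weight_def by simp

lemma poisson_weight_Suc: "poisson_weight r (Suc j) = poisson_weight r j * r / real (Suc j)"
  unfolding poisson_weight_def by (simp add: field_simps)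

lemma poisson_weight_sums: "poisson_weight r sums 1"
proof -
  have "(\<lambda>j. exp (- r) * (r ^ j /\<^sub>R fact j)) sums (exp (- r) * exp r)"
    by (rule sums_mult) (rule exp_converges)
  then show ?thesis unfolding poisson_weight_def by (simp add: exp_minus field_simps)
qed

lemma poisson_weight_mean_sums: "(\<lambda>j. poisson_weight r j * real j) sums r"
proof -
  have "(\<lambda>j. poisson_weight r (Suc j) * real (Suc j)) = (\<lambda>j. r * poisson_weight r j)"
    by (simp add: poisson_weight_Suc ac_simps del: of_nat_Suc)
  moreover have "(\<lambda>j. r * poisson_weight r j) sums (r * 1)"
    by (rule sums_mult[OF poisson_weight_sums])
  ultimately have "(\<lambda>j. poisson_weight r (Suc j) * real (Suc j)) sums r" by simp
  then show ?thesis by (subst (asm) sums_Suc_iff) simp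
qed

lemma ncchi2_density_eq_mixture:
  "ncchi2_density k eta x = (\<Sum>j. poisson_weight (eta / 2) j * chi2_density (k + 2 * j) x)"
  unfolding ncchi2_density_def poisson_weight_def by simp

lemma summable_chi2_mixture:
  assumes k: "k > 0" and r: "r \<ge> 0"
  shows "summable (\<lambda>j. poisson_weight r j * chi2_density (k + 2 * j) x)"
proof (cases "x > 0")
  case x: True
  show ?thesis
  proof (rule summable_ratio_test[of "1/2" "nat \<lceil>2 * r * x\<rceil>"])
    fix j assume j: "j \<ge> nat \<lceil>2 * r * x\<rceil>"
    \<comment> \<open>consecutive terms have ratio \<open>r x / ((j + 1)(k + 2j))\<close>, at most \<open>1/2\<close> once \<open>j \<ge> 2 r x\<close>\<close>
    have kj: "k + 2 * j > 0" using k by simp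
    have "r * x \<le> real (Suc j) * real (k + 2 * j) / 2"
    proof -
      have "2 * r * x \<le> real j" using j by linarith
      also have "\<dots> \<le> real (Suc j) * 1" by simp
      also have "\<dots> \<le> real (Suc j) * real (k + 2 * j)"
        using kj by (intro mult_left_mono) (simp_all add: Suc_le_eq[symmetric])
      finally show ?thesis by simp
    qed
    moreover have "0 < real (Suc j) * real (k + 2 * j)"
      using kj by (intro mult_pos_pos) (simp_all only: of_nat_0_less_iff zero_less_Suc)
    ultimately have ratio: "r / real (Suc j) * (x / real (k + 2 * j)) \<le> 1 / 2"
      by (simp add: pos_divide_le_eq)
    have "poisson_weight r (Suc j) * chi2_density (k + 2 * Suc j) x
        = (poisson_weight r j * chi2_density (k + 2 * j) x) * (r / real (Suc j) * (x / real (k + 2 * j)))"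
      using chi2_density_add_two[OF kj x] by (simp add: poisson_weight_Suc add.assoc field_simps)
    also have "\<dots> \<le> (poisson_weight r j * chi2_density (k + 2 * j) x) * (1 / 2)"
      by (intro mult_left_mono ratio mult_nonneg_nonneg poisson_weight_nonneg r chi2_density_nonneg)
    finally show "norm (poisson_weight r (Suc j) * chi2_density (k + 2 * Suc j) x)
        \<le> 1 / 2 * norm (poisson_weight r j * chi2_density (k + 2 * j) x)"
      using r by (simp add: poisson_weight_nonneg chi2_density_nonneg)
  qed simp
qed (simp add: chi2_density_def)

lemma ncchi2_density_nonneg:
  assumes "k > 0" and "eta \<ge> 0"
  shows "0 \<le> ncchi2_density k eta x"
  unfolding ncchi2_density_eq_mixture using assms
  by (intro suminf_nonneg summable_chi2_mixture mult_nonneg_nonneg poisson_weight_nonneg chi2_density_nonneg)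
    simp_all

lemma nn_integral_ncchi2_mean:
  assumes k: "k > 0" and eta: "eta \<ge> 0"
  shows "(\<integral>\<^sup>+x. ennreal (ncchi2_density k eta x * x) \<partial>lborel) = ennreal (real k + eta)"
proof -
  let ?w = "poisson_weight (eta / 2)"
  have kj: "k + 2 * j > 0" for j using k by simp
  have w_nonneg: "0 \<le> ?w j" for j using eta by (simp add: poisson_weight_nonneg)
  have term_nonneg: "0 \<le> ?w j * (chi2_density (k + 2 * j) x * x)" for j x
    by (intro mult_nonneg_nonneg w_nonneg chi2_density_mult_nonneg)
  have pointwise: "ennreal (ncchi2_density k eta x * x)
      = (\<Sum>j. ennreal (?w j * (chi2_density (k + 2 * j) x * x)))" for x
  proof -
    have "(\<lambda>j. ?w j * (chi2_density (k + 2 * j) x * x)) sums (ncchi2_density k eta x * x)"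
      unfolding ncchi2_density_eq_mixture mult.assoc[symmetric]
      by (intro sums_mult2 summable_sums summable_chi2_mixture k) (simp add: eta)
    moreover have "0 \<le> ncchi2_density k eta x * x"
      by (rule sums_le[OF _ sums_zero calculation]) (rule term_nonneg)
    ultimately show ?thesis using term_nonneg by (simp add: sums_iff suminf_ennreal2)
  qed
  have "(\<integral>\<^sup>+x. ennreal (ncchi2_density k eta x * x) \<partial>lborel)
      = (\<Sum>j. \<integral>\<^sup>+x. ennreal (?w j) * ennreal (chi2_density (k + 2 * j) x * x) \<partial>lborel)"
    unfolding pointwise using w_nonneg
    by (subst nn_integral_suminf) (measurable, simp add: ennreal_mult')
  also have "\<dots> = (\<Sum>j. ennreal (?w j * (real k + 2 * real j)))"
  proof (rule suminf_cong)
    fix j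
    have "(\<integral>\<^sup>+x. ennreal (chi2_density (k + 2 * j) x * x) \<partial>lborel) = ennreal (real k + 2 * real j)"
      using chi2_mean[OF kj[of j]]
      by (subst nn_integral_eq_integral) (auto simp: has_bochner_integral_iff chi2_density_mult_nonneg)
    then show "(\<integral>\<^sup>+x. ennreal (?w j) * ennreal (chi2_density (k + 2 * j) x * x) \<partial>lborel)
        = ennreal (?w j * (real k + 2 * real j))"
      using w_nonneg by (subst nn_integral_cmult) (simp_all add: ennreal_mult')
  qed
  also have "\<dots> = ennreal (real k + eta)"
  proof -
    have "(\<lambda>j. ?w j * real k + 2 * (?w j * real j)) sums (1 * real k + 2 * (eta / 2))"
      by (intro sums_add sums_mult sums_mult2 poisson_weight_sums poisson_weight_mean_sums)
    then have "(\<lambda>j. ?w j * (real k + 2 * real j)) sums (real k + eta)"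
      by (simp add: algebra_simps)
    then show ?thesis
      using w_nonneg eta by (subst (asm) sums_ennreal[symmetric]) (auto simp: sums_iff)
  qed
  finally show ?thesis .
qed

lemma ncchi2_mean:
  assumes "k > 0" and "eta \<ge> 0"
  shows "has_bochner_integral lborel (\<lambda>x. ncchi2_density k eta x * x) (real k + eta)"
proof (rule has_bochner_integral_nn_integral)
  show "(\<lambda>x. ncchi2_density k eta x * x) \<in> borel_measurable lborel"
    unfolding ncchi2_density_eq_mixture by measurable
  show "AE x in lborel. 0 \<le> ncchi2_density k eta x * x"
  proof (rule AE_I2)
    fix x :: real
    show "0 \<le> ncchi2_density k eta x * x"
      using ncchi2_density_nonneg[OF assms, of x]
      by (cases "x > 0") (simp_all add: ncchi2_density_def chi2_density_def)
  qed
qed (use nn_integral_ncchi2_mean[OF assms] assms in auto)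

section \<open>Moments of the observations and of their linear combinations\<close>

lemma has_bochner_integral_distributed:
  assumes D: "distributed M lborel X (\<lambda>x. ennreal (f x))" and f: "\<And>x. 0 \<le> f x"
    and g: "g \<in> borel_measurable borel"
    and H: "has_bochner_integral lborel (\<lambda>x. f x * g x) v"
  shows "has_bochner_integral M (\<lambda>\<omega>. g (X \<omega>)) v"
proof -
  have g': "g \<in> borel_measurable lborel" using g by simp
  show ?thesis
    using distributed_integrable[OF D g'] distributed_integral[OF D g'] f H
    by (auto simp: has_bochner_integral_iff)
qed

lemma scaled_chi2_moments:
  assumes D: "distributed M lborel (\<lambda>\<omega>. Y \<omega> / s\<^sup>2) (\<lambda>x. ennreal (chi2_density k x))"
    and s: "s \<noteq> 0" and k: "k > 0"
  shows "has_bochner_integral M Y (real k * s\<^sup>2)"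
    and "has_bochner_integral M (\<lambda>\<omega>. (Y \<omega>)\<^sup>2) (real k * (real k + 2) * s ^ 4)"
proof -
  have "has_bochner_integral lborel (\<lambda>x. chi2_density k x * (s\<^sup>2 * x)) (s\<^sup>2 * real k)"
    using has_bochner_integral_mult_right[OF chi2_mean[OF k], of "s\<^sup>2"] by (simp add: ac_simps)
  from has_bochner_integral_distributed[OF D chi2_density_nonneg _ this]
  show "has_bochner_integral M Y (real k * s\<^sup>2)" using s by (simp add: ac_simps)
  have "has_bochner_integral lborel (\<lambda>x. chi2_density k x * (s\<^sup>2 * x)\<^sup>2) (s ^ 4 * (real k * (real k + 2)))"
    using has_bochner_integral_mult_right[OF chi2_second_moment[OF k], of "s ^ 4"]
    by (simp add: ac_simps power_mult_distrib flip: power_mult)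
  from has_bochner_integral_distributed[OF D chi2_density_nonneg _ this]
  show "has_bochner_integral M (\<lambda>\<omega>. (Y \<omega>)\<^sup>2) (real k * (real k + 2) * s ^ 4)"
    using s by (simp add: ac_simps)
qed

lemma scaled_ncchi2_mean:
  assumes D: "distributed M lborel (\<lambda>\<omega>. Y \<omega> / s\<^sup>2) (\<lambda>x. ennreal (ncchi2_density k eta x))"
    and s: "s \<noteq> 0" and k: "k > 0" and eta: "eta \<ge> 0"
  shows "has_bochner_integral M Y ((real k + eta) * s\<^sup>2)"
proof -
  have "has_bochner_integral lborel (\<lambda>x. ncchi2_density k eta x * (s\<^sup>2 * x)) (s\<^sup>2 * (real k + eta))"
    using has_bochner_integral_mult_right[OF ncchi2_mean[OF k eta], of "s\<^sup>2"] by (simp add: ac_simps)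
  from has_bochner_integral_distributed[OF D ncchi2_density_nonneg[OF k eta] _ this]
  show ?thesis using s by (simp add: ac_simps)
qed

lemma (in prob_space) zero_one_moments:
  assumes B: "B \<in> borel_measurable M" and B01: "\<forall>\<omega>\<in>space M. B \<omega> \<in> {0, 1}"
    and p: "measure M {\<omega> \<in> space M. B \<omega> = 1} = p"
  shows "has_bochner_integral M B p" and "has_bochner_integral M (\<lambda>\<omega>. (B \<omega>)\<^sup>2) p"
proof -
  define A where "A = {\<omega> \<in> space M. B \<omega> = 1}"
  have "A \<in> sets M" unfolding A_def using B by measurable
  then have ind: "has_bochner_integral M (indicator A) p"
    using has_bochner_integral_real_indicator[of A M] p by (simp add: A_def emeasure_eq_measure)
  have "\<forall>\<omega>\<in>space M. B \<omega> = indicator A \<omega> \<and> (B \<omega>)\<^sup>2 = indicator A \<omega>"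
    using B01 by (auto simp: A_def indicator_def)
  then show "has_bochner_integral M B p" and "has_bochner_integral M (\<lambda>\<omega>. (B \<omega>)\<^sup>2) p"
    using ind by (auto intro: has_bochner_integral_cong[THEN iffD2, OF refl _ refl])
qed

lemma sum_sum_if_eq_square_plus:
  fixes c m q :: "'i \<Rightarrow> real"
  assumes "finite I"
  shows "(\<Sum>j\<in>I. \<Sum>k\<in>I. c j * c k * (if j = k then q j else m j * m k))
     = (\<Sum>j\<in>I. c j * m j)\<^sup>2 + (\<Sum>j\<in>I. (c j)\<^sup>2 * (q j - (m j)\<^sup>2))"
proof -
  have "(\<Sum>j\<in>I. \<Sum>k\<in>I. c j * c k * (if j = k then q j else m j * m k))
      = (\<Sum>j\<in>I. \<Sum>k\<in>I. (c j * m j) * (c k * m k) + (if j = k then (c j)\<^sup>2 * (q j - (m j)\<^sup>2) else 0))"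
    by (intro sum.cong refl) (auto simp: power2_eq_square algebra_simps)
  also have "\<dots> = (\<Sum>j\<in>I. c j * m j)\<^sup>2 + (\<Sum>j\<in>I. (c j)\<^sup>2 * (q j - (m j)\<^sup>2))"
    using assms by (simp add: sum.distrib power2_eq_square sum_product)
  finally show ?thesis .
qed

context prob_space
begin

lemma has_bochner_integral_lin_comb:
  fixes X :: "'i \<Rightarrow> 'a \<Rightarrow> real"
  assumes "\<And>j. j \<in> I \<Longrightarrow> has_bochner_integral M (X j) (m j)"
  shows "has_bochner_integral M (\<lambda>\<omega>. \<Sum>j\<in>I. c j * X j \<omega>) (\<Sum>j\<in>I. c j * m j)"
  by (intro has_bochner_integral_sum has_bochner_integral_mult_right assms)

lemma indep_vars_has_bochner_integral_mult:
  fixes X :: "'i \<Rightarrow> 'a \<Rightarrow> real"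
  assumes ind: "indep_vars (\<lambda>_. borel) X I" and jk: "j \<in> I" "k \<in> I" "j \<noteq> k"
    and m: "\<And>j. j \<in> I \<Longrightarrow> has_bochner_integral M (X j) (m j)"
  shows "has_bochner_integral M (\<lambda>\<omega>. X j \<omega> * X k \<omega>) (m j * m k)"
proof -
  have ind2: "indep_vars (\<lambda>_. borel) X {j, k}"
    by (rule indep_vars_subset[OF ind]) (use jk in auto)
  have int: "\<And>i. i \<in> {j, k} \<Longrightarrow> integrable M (X i)"
    using m jk by (auto simp: has_bochner_integral_iff)
  show ?thesis
    using indep_vars_integrable[OF _ ind2 int] indep_vars_lebesgue_integral[OF _ ind2 int]
      m[OF jk(1)] m[OF jk(2)] jk(3)
    by (simp add: has_bochner_integral_iff)
qed

lemma indep_vars_lin_comb_variance: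
  fixes X :: "'i \<Rightarrow> 'a \<Rightarrow> real"
  assumes fin: "finite I" and ind: "indep_vars (\<lambda>_. borel) X I"
    and m: "\<And>j. j \<in> I \<Longrightarrow> has_bochner_integral M (X j) (m j)"
    and q: "\<And>j. j \<in> I \<Longrightarrow> has_bochner_integral M (\<lambda>\<omega>. (X j \<omega>)\<^sup>2) (q j)"
  shows "has_bochner_integral M (\<lambda>\<omega>. ((\<Sum>j\<in>I. c j * X j \<omega>) - (\<Sum>j\<in>I. c j * m j))\<^sup>2)
           (\<Sum>j\<in>I. (c j)\<^sup>2 * (q j - (m j)\<^sup>2))"
proof -
  define \<mu> where "\<mu> = (\<Sum>j\<in>I. c j * m j)"
  have const: "has_bochner_integral M (\<lambda>_. x) x" for x :: real
    by (simp add: has_bochner_integral_iff prob_space)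
  have prod: "has_bochner_integral M (\<lambda>\<omega>. X j \<omega> * X k \<omega>) (if j = k then q j else m j * m k)"
    if "j \<in> I" "k \<in> I" for j k
    using q[of j] indep_vars_has_bochner_integral_mult[OF ind that _ m] that
    by (cases "j = k") (simp_all add: power2_eq_square)
  have "has_bochner_integral M
      (\<lambda>\<omega>. (\<Sum>j\<in>I. \<Sum>k\<in>I. c j * c k * (X j \<omega> * X k \<omega>)) - 2 * \<mu> * (\<Sum>j\<in>I. c j * X j \<omega>) + \<mu>\<^sup>2)
      ((\<Sum>j\<in>I. \<Sum>k\<in>I. c j * c k * (if j = k then q j else m j * m k)) - 2 * \<mu> * \<mu> + \<mu>\<^sup>2)"
    unfolding \<mu>_def
    by (intro has_bochner_integral_add has_bochner_integral_diff has_bochner_integral_sum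
        has_bochner_integral_mult_right has_bochner_integral_lin_comb prod m const)
  moreover have "(\<Sum>j\<in>I. \<Sum>k\<in>I. c j * c k * (X j \<omega> * X k \<omega>)) - 2 * \<mu> * (\<Sum>j\<in>I. c j * X j \<omega>) + \<mu>\<^sup>2
      = ((\<Sum>j\<in>I. c j * X j \<omega>) - \<mu>)\<^sup>2" for \<omega>
    by (simp add: power2_eq_square sum_product algebra_simps)
  ultimately show ?thesis
    using sum_sum_if_eq_square_plus[OF fin, of c q m] by (simp add: \<mu>_def power2_eq_square)
qed

end

section \<open>Maximising the deflection\<close>

lemma Cauchy_Schwarz_ratio_le:
  fixes a d v :: "'i \<Rightarrow> real"
  assumes v: "\<And>i. i \<in> A \<Longrightarrow> v i > 0"
  shows "(\<Sum>i\<in>A. d i * a i)\<^sup>2 / (\<Sum>i\<in>A. (d i)\<^sup>2 * v i) \<le> (\<Sum>i\<in>A. (a i)\<^sup>2 / v i)"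
proof -
  have "(\<Sum>i\<in>A. d i * a i)\<^sup>2 = (\<Sum>i\<in>A. (d i * sqrt (v i)) * (a i / sqrt (v i)))\<^sup>2"
    using v by (intro arg_cong[where f = "\<lambda>x. x\<^sup>2"] sum.cong) (auto simp: less_imp_neq[symmetric])
  also have "\<dots> \<le> (\<Sum>i\<in>A. (d i * sqrt (v i))\<^sup>2) * (\<Sum>i\<in>A. (a i / sqrt (v i))\<^sup>2)"
    by (rule Cauchy_Schwarz_ineq_sum)
  also have "\<dots> = (\<Sum>i\<in>A. (d i)\<^sup>2 * v i) * (\<Sum>i\<in>A. (a i)\<^sup>2 / v i)"
    using v by (intro arg_cong2[where f = "(*)"] sum.cong)
      (simp_all add: power_mult_distrib power_divide less_imp_le[OF v])
  finally have CS: "(\<Sum>i\<in>A. d i * a i)\<^sup>2 \<le> (\<Sum>i\<in>A. (d i)\<^sup>2 * v i) * (\<Sum>i\<in>A. (a i)\<^sup>2 / v i)" .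
  have "0 \<le> (\<Sum>i\<in>A. (d i)\<^sup>2 * v i)" and "0 \<le> (\<Sum>i\<in>A. (a i)\<^sup>2 / v i)"
    using v by (auto intro!: sum_nonneg simp: less_imp_le)
  with CS show ?thesis
    by (cases "(\<Sum>i\<in>A. (d i)\<^sup>2 * v i) = 0") (simp_all add: divide_le_eq mult.commute)
qed

lemma Cauchy_Schwarz_ratio_eq:
  fixes a d v :: "'i \<Rightarrow> real"
  assumes v: "\<And>i. i \<in> A \<Longrightarrow> v i > 0"
    and S: "(\<Sum>i\<in>A. a i / v i) \<noteq> 0"
    and d: "\<And>i. i \<in> A \<Longrightarrow> d i = a i / v i / (\<Sum>i\<in>A. a i / v i)"
  shows "(\<Sum>i\<in>A. d i * a i)\<^sup>2 / (\<Sum>i\<in>A. (d i)\<^sup>2 * v i) = (\<Sum>i\<in>A. (a i)\<^sup>2 / v i)"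
proof -
  define S where "S = (\<Sum>i\<in>A. a i / v i)"
  define Q where "Q = (\<Sum>i\<in>A. (a i)\<^sup>2 / v i)"
  have "finite A" using S by (meson sum.infinite)
  have num: "(\<Sum>i\<in>A. d i * a i) = Q / S"
    unfolding Q_def S_def sum_divide_distrib using d by (intro sum.cong) (simp_all add: power2_eq_square)
  have den: "(\<Sum>i\<in>A. (d i)\<^sup>2 * v i) = Q / S\<^sup>2"
    unfolding Q_def S_def sum_divide_distrib using d v
    by (intro sum.cong) (auto simp: power2_eq_square field_simps dest: less_imp_neq[symmetric])
  have "Q \<noteq> 0"
  proof
    assume "Q = 0"
    then have "\<forall>i\<in>A. (a i)\<^sup>2 / v i = 0"
      using \<open>finite A\<close> v by (subst (asm) Q_def, subst (asm) sum_nonneg_eq_0_iff) (auto simp: less_imp_le)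
    then have "S = 0" unfolding S_def using v by (auto intro!: sum.neutral)
    with S show False by (simp add: S_def)
  qed
  then show ?thesis using S unfolding num den S_def[symmetric] Q_def[symmetric]
    by (simp add: power2_eq_square field_simps)
qed

section \<open>The fusion statistic\<close>

locale byzantine_fusion =
  H0: prob_space M0 + H1: prob_space M1
  for M0 M1 :: "'a measure"
    and N N1 M :: nat
    and sigma eta P Delta :: "nat \<Rightarrow> real"
    and Y B :: "nat \<Rightarrow> 'a \<Rightarrow> real" +
  assumes N1_le_N: "N1 \<le> N" and M_pos: "M > 0"
    and sigma_pos: "\<And>i. i \<in> {1..N} \<Longrightarrow> sigma i > 0"
    and eta_nonneg: "\<And>i. i \<in> {1..N} \<Longrightarrow> eta i \<ge> 0"
    and P_range: "\<And>i. i \<in> {1..N1} \<Longrightarrow> 0 \<le> P i \<and> P i \<le> 1"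
    and H0_chi2: "\<And>i. i \<in> {1..N} \<Longrightarrow>
          distributed M0 lborel (\<lambda>\<omega>. Y i \<omega> / (sigma i)\<^sup>2) (\<lambda>x. ennreal (chi2_density M x))"
    and H1_ncchi2: "\<And>i. i \<in> {1..N} \<Longrightarrow>
          distributed M1 lborel (\<lambda>\<omega>. Y i \<omega> / (sigma i)\<^sup>2) (\<lambda>x. ennreal (ncchi2_density M (eta i) x))"
    and B0_01: "\<And>i. i \<in> {1..N1} \<Longrightarrow> \<forall>\<omega>\<in>space M0. B i \<omega> \<in> {0, 1}"
    and B1_01: "\<And>i. i \<in> {1..N1} \<Longrightarrow> \<forall>\<omega>\<in>space M1. B i \<omega> \<in> {0, 1}"
    and B0_prob: "\<And>i. i \<in> {1..N1} \<Longrightarrow> measure M0 {\<omega> \<in> space M0. B i \<omega> = 1} = P i"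
    and B1_prob: "\<And>i. i \<in> {1..N1} \<Longrightarrow> measure M1 {\<omega> \<in> space M1. B i \<omega> = 1} = P i"
    and indep0: "H0.indep_vars (\<lambda>_. borel) (case_sum Y B) ({1..N} <+> {1..N1})"
    and indep1: "H1.indep_vars (\<lambda>_. borel) (case_sum Y B) ({1..N} <+> {1..N1})"
begin

definition mean_shift :: "nat \<Rightarrow> real" where
  "mean_shift i = eta i * (sigma i)\<^sup>2 - (if i \<le> N1 then 2 * P i * Delta i else 0)"

definition null_variance :: "nat \<Rightarrow> real" where
  "null_variance i = (if i \<le> N1 then (Delta i)\<^sup>2 * P i * (1 - P i) else 0) + 2 * real M * (sigma i) ^ 4"

lemma null_variance_pos: "i \<in> {1..N} \<Longrightarrow> null_variance i > 0"
  using sigma_pos[of i] P_range[of i] M_pos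
  by (auto simp: null_variance_def intro!: add_nonneg_pos mult_nonneg_nonneg)

lemma sum_nodes_split: "(\<Sum>i=1..N. f i) = (\<Sum>i=1..N1. f i) + (\<Sum>i=N1+1..N. f i)"
  using sum.ub_add_nat[of 1 N1 f "N - N1"] N1_le_N by simp

lemma sum_nodes_if_byzantine: "(\<Sum>i=1..N. if i \<le> N1 then f i else 0) = (\<Sum>i=1..N1. f i)"
proof -
  have "{i \<in> {1..N}. i \<le> N1} = {1..N1}" using N1_le_N by auto
  then show ?thesis using sum.inter_filter[of "{1..N}" f "\<lambda>i. i \<le> N1"] by simp
qed

lemma Lambda0_lin_comb:
  "Lambda0 N N1 Delta Y B \<delta> =
     (\<lambda>\<omega>. \<Sum>j\<in>{1..N} <+> {1..N1}. case_sum \<delta> (\<lambda>i. \<delta> i * Delta i) j * case_sum Y B j \<omega>)"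
proof
  fix \<omega>
  have "Lambda0 N N1 Delta Y B \<delta> \<omega> = (\<Sum>i=1..N. \<delta> i * Y i \<omega>) + (\<Sum>i=1..N1. \<delta> i * Delta i * B i \<omega>)"
    unfolding Lambda0_def sum_nodes_split[of "\<lambda>i. \<delta> i * Y i \<omega>"] by (simp add: sum.distrib algebra_simps)
  then show "Lambda0 N N1 Delta Y B \<delta> \<omega> =
      (\<Sum>j\<in>{1..N} <+> {1..N1}. case_sum \<delta> (\<lambda>i. \<delta> i * Delta i) j * case_sum Y B j \<omega>)"
    by (simp add: sum.Plus algebra_simps)
qed

lemma Lambda1_lin_comb:
  "Lambda1 N N1 Delta Y B \<delta> =
     (\<lambda>\<omega>. \<Sum>j\<in>{1..N} <+> {1..N1}. case_sum \<delta> (\<lambda>i. - \<delta> i * Delta i) j * case_sum Y B j \<omega>)"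
proof
  fix \<omega>
  have "Lambda1 N N1 Delta Y B \<delta> \<omega> = (\<Sum>i=1..N. \<delta> i * Y i \<omega>) - (\<Sum>i=1..N1. \<delta> i * Delta i * B i \<omega>)"
    unfolding Lambda1_def sum_nodes_split[of "\<lambda>i. \<delta> i * Y i \<omega>"] by (simp add: sum_subtractf algebra_simps)
  then show "Lambda1 N N1 Delta Y B \<delta> \<omega> =
      (\<Sum>j\<in>{1..N} <+> {1..N1}. case_sum \<delta> (\<lambda>i. - \<delta> i * Delta i) j * case_sum Y B j \<omega>)"
    by (simp add: sum.Plus sum_negf algebra_simps)
qed

lemma obs_moments_H0:
  assumes j: "j \<in> {1..N} <+> {1..N1}"
  shows "has_bochner_integral M0 (case_sum Y B j) (case_sum (\<lambda>i. real M * (sigma i)\<^sup>2) P j)"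
      (is ?mean)
    and "has_bochner_integral M0 (\<lambda>\<omega>. (case_sum Y B j \<omega>)\<^sup>2)
           (case_sum (\<lambda>i. real M * (real M + 2) * (sigma i) ^ 4) P j)" (is ?square)
proof -
  have "?mean \<and> ?square"
  proof (cases j)
    case (Inl i)
    with j have i: "i \<in> {1..N}" by auto
    have "sigma i \<noteq> 0" using sigma_pos[OF i] by simp
    from scaled_chi2_moments[OF H0_chi2[OF i] this M_pos] show ?thesis unfolding Inl by simp
  next
    case (Inr i)
    with j have i: "i \<in> {1..N1}" by auto
    have "case_sum Y B j \<in> borel_measurable M0"
      using indep0 j unfolding H0.indep_vars_def by blast
    then have "B i \<in> borel_measurable M0" unfolding Inr by simp
    from H0.zero_one_moments[OF this B0_01[OF i] B0_prob[OF i]] show ?thesis unfolding Inr by simp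
  qed
  then show ?mean and ?square by auto
qed

lemma obs_mean_H1:
  assumes j: "j \<in> {1..N} <+> {1..N1}"
  shows "has_bochner_integral M1 (case_sum Y B j) (case_sum (\<lambda>i. (real M + eta i) * (sigma i)\<^sup>2) P j)"
proof (cases j)
  case (Inl i)
  with j have i: "i \<in> {1..N}" by auto
  have "sigma i \<noteq> 0" using sigma_pos[OF i] by simp
  from scaled_ncchi2_mean[OF H1_ncchi2[OF i] this M_pos eta_nonneg[OF i]] show ?thesis unfolding Inl by simp
next
  case (Inr i)
  with j have i: "i \<in> {1..N1}" by auto
  have "case_sum Y B j \<in> borel_measurable M1"
    using indep1 j unfolding H1.indep_vars_def by blast
  then have "B i \<in> borel_measurable M1" unfolding Inr by simp
  from H1.zero_one_moments(1)[OF this B1_01[OF i] B1_prob[OF i]] show ?thesis unfolding Inr by simp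
qed

lemma Lambda0_mean:
  "has_bochner_integral M0 (Lambda0 N N1 Delta Y B \<delta>)
     ((\<Sum>i=1..N. \<delta> i * (real M * (sigma i)\<^sup>2)) + (\<Sum>i=1..N1. \<delta> i * Delta i * P i))"
proof -
  have "has_bochner_integral M0 (Lambda0 N N1 Delta Y B \<delta>) (\<Sum>j\<in>{1..N} <+> {1..N1}.
      case_sum \<delta> (\<lambda>i. \<delta> i * Delta i) j * case_sum (\<lambda>i. real M * (sigma i)\<^sup>2) P j)"
    unfolding Lambda0_lin_comb by (rule H0.has_bochner_integral_lin_comb[OF obs_moments_H0(1)])
  then show ?thesis by (simp add: sum.Plus)
qed

lemma Lambda1_mean:
  "has_bochner_integral M1 (Lambda1 N N1 Delta Y B \<delta>)
     ((\<Sum>i=1..N. \<delta> i * ((real M + eta i) * (sigma i)\<^sup>2)) - (\<Sum>i=1..N1. \<delta> i * Delta i * P i))"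
proof -
  have "has_bochner_integral M1 (Lambda1 N N1 Delta Y B \<delta>) (\<Sum>j\<in>{1..N} <+> {1..N1}.
      case_sum \<delta> (\<lambda>i. - \<delta> i * Delta i) j * case_sum (\<lambda>i. (real M + eta i) * (sigma i)\<^sup>2) P j)"
    unfolding Lambda1_lin_comb by (rule H1.has_bochner_integral_lin_comb[OF obs_mean_H1])
  then show ?thesis by (simp add: sum.Plus sum_negf)
qed

lemma Lambda0_variance:
  "has_bochner_integral M0
     (\<lambda>\<omega>. (Lambda0 N N1 Delta Y B \<delta> \<omega>
            - ((\<Sum>i=1..N. \<delta> i * (real M * (sigma i)\<^sup>2)) + (\<Sum>i=1..N1. \<delta> i * Delta i * P i)))\<^sup>2)
     (\<Sum>i=1..N. (\<delta> i)\<^sup>2 * null_variance i)"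
proof -
  have "(\<delta> i)\<^sup>2 * null_variance i
      = (\<delta> i)\<^sup>2 * (real M * (real M + 2) * (sigma i) ^ 4 - (real M * (sigma i)\<^sup>2)\<^sup>2)
        + (if i \<le> N1 then (\<delta> i * Delta i)\<^sup>2 * (P i - (P i)\<^sup>2) else 0)" for i
    by (simp add: null_variance_def power2_eq_square eval_nat_numeral algebra_simps)
  then have "(\<Sum>i=1..N. (\<delta> i)\<^sup>2 * null_variance i)
      = (\<Sum>i=1..N. (\<delta> i)\<^sup>2 * (real M * (real M + 2) * (sigma i) ^ 4 - (real M * (sigma i)\<^sup>2)\<^sup>2))
        + (\<Sum>i=1..N1. (\<delta> i * Delta i)\<^sup>2 * (P i - (P i)\<^sup>2))"
    by (simp only: sum.distrib sum_nodes_if_byzantine)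
  with H0.indep_vars_lin_comb_variance[OF _ indep0 obs_moments_H0, of "case_sum \<delta> (\<lambda>i. \<delta> i * Delta i)"]
  show ?thesis
    by (simp add: Lambda0_lin_comb sum.Plus comp_def)
qed

lemma deflection_eq:
  "deflection M0 M1 (Lambda0 N N1 Delta Y B \<delta>) (Lambda1 N N1 Delta Y B \<delta>)
     = (\<Sum>i=1..N. \<delta> i * mean_shift i)\<^sup>2 / (\<Sum>i=1..N. (\<delta> i)\<^sup>2 * null_variance i)"
proof -
  have pointwise: "\<delta> i * mean_shift i
      = \<delta> i * ((real M + eta i) * (sigma i)\<^sup>2) - \<delta> i * (real M * (sigma i)\<^sup>2)
        - 2 * (if i \<le> N1 then \<delta> i * Delta i * P i else 0)" for i
    by (simp add: mean_shift_def algebra_simps)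
  have "(\<Sum>i=1..N. \<delta> i * mean_shift i)
      = (\<Sum>i=1..N. \<delta> i * ((real M + eta i) * (sigma i)\<^sup>2)) - (\<Sum>i=1..N. \<delta> i * (real M * (sigma i)\<^sup>2))
        - 2 * (\<Sum>i=1..N1. \<delta> i * Delta i * P i)"
    unfolding pointwise sum_subtractf sum_distrib_left[symmetric] sum_nodes_if_byzantine ..
  then have "(\<Sum>i=1..N. \<delta> i * mean_shift i)
      = (\<Sum>i=1..N. \<delta> i * ((real M + eta i) * (sigma i)\<^sup>2)) - (\<Sum>i=1..N1. \<delta> i * Delta i * P i)
        - ((\<Sum>i=1..N. \<delta> i * (real M * (sigma i)\<^sup>2)) + (\<Sum>i=1..N1. \<delta> i * Delta i * P i))"
    by simp
  then show ?thesis
    using Lambda0_mean Lambda1_mean Lambda0_variance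
    by (simp add: deflection_def has_bochner_integral_iff)
qed

end

theorem lemma4:
  fixes M0 M1 :: "'a measure"
    and N N1 M :: nat
    and sigma eta P Delta :: "nat \<Rightarrow> real"
    and Y B :: "nat \<Rightarrow> 'a \<Rightarrow> real"
  assumes "prob_space M0" and "prob_space M1"
    and "N1 \<le> N" and "M > 0"
    and sigma_pos: "\<And>i. i \<in> {1..N} \<Longrightarrow> sigma i > 0"
    and eta_nonneg: "\<And>i. i \<in> {1..N} \<Longrightarrow> eta i \<ge> 0"
    and P_range: "\<And>i. i \<in> {1..N1} \<Longrightarrow> 0 \<le> P i \<and> P i \<le> 1"
    and H0_chi2: "\<And>i. i \<in> {1..N} \<Longrightarrow>
          distributed M0 lborel (\<lambda>\<omega>. Y i \<omega> / (sigma i)^2) (\<lambda>x. ennreal (chi2_density M x))"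
    and H1_ncchi2: "\<And>i. i \<in> {1..N} \<Longrightarrow>
          distributed M1 lborel (\<lambda>\<omega>. Y i \<omega> / (sigma i)^2) (\<lambda>x. ennreal (ncchi2_density M (eta i) x))"
    and B0_01: "\<And>i. i \<in> {1..N1} \<Longrightarrow> \<forall>\<omega>\<in>space M0. B i \<omega> \<in> {0, 1}"
    and B1_01: "\<And>i. i \<in> {1..N1} \<Longrightarrow> \<forall>\<omega>\<in>space M1. B i \<omega> \<in> {0, 1}"
    and B0_prob: "\<And>i. i \<in> {1..N1} \<Longrightarrow> measure M0 {\<omega> \<in> space M0. B i \<omega> = 1} = P i"
    and B1_prob: "\<And>i. i \<in> {1..N1} \<Longrightarrow> measure M1 {\<omega> \<in> space M1. B i \<omega> = 1} = P i"
    and indep0: "prob_space.indep_vars M0 (\<lambda>_. borel) (case_sum Y B) (Inl ` {1..N} \<union> Inr ` {1..N1})"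
    and indep1: "prob_space.indep_vars M1 (\<lambda>_. borel) (case_sum Y B) (Inl ` {1..N} \<union> Inr ` {1..N1})"
  defines "wB \<equiv> \<lambda>i. (eta i * (sigma i)^2 - 2 * P i * Delta i) /
                       ((Delta i)^2 * P i * (1 - P i) + 2 * real M * (sigma i)^4)"
    and "wH \<equiv> \<lambda>i. eta i / (2 * real M * (sigma i)^2)"
  defines "S \<equiv> (\<Sum>i=1..N1. wB i) + (\<Sum>i=N1+1..N. wH i)"
  defines "\<delta>opt \<equiv> \<lambda>i. if i \<le> N1 then wB i / S else wH i / S"
  assumes S_nz: "S \<noteq> 0"
  shows "(\<Sum>i=1..N. \<delta>opt i) = 1 \<and>
         (\<forall>\<delta> :: nat \<Rightarrow> real. (\<Sum>i=1..N. \<delta> i) = 1 \<longrightarrow>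
            deflection M0 M1 (Lambda0 N N1 Delta Y B \<delta>) (Lambda1 N N1 Delta Y B \<delta>)
              \<le> deflection M0 M1 (Lambda0 N N1 Delta Y B \<delta>opt) (Lambda1 N N1 Delta Y B \<delta>opt))"
proof -
  interpret byzantine_fusion M0 M1 N N1 M sigma eta P Delta Y B
    using \<open>prob_space M0\<close> \<open>prob_space M1\<close> \<open>N1 \<le> N\<close> \<open>M > 0\<close> sigma_pos eta_nonneg P_range
      H0_chi2 H1_ncchi2 B0_01 B1_01 B0_prob B1_prob indep0 indep1
    by (intro byzantine_fusion.intro byzantine_fusion_axioms.intro) (simp_all add: Plus_def)
  let ?r = "\<lambda>i. mean_shift i / null_variance i"
  have wB_eq: "wB i = ?r i" if "i \<in> {1..N1}" for i
    using that by (simp add: wB_def mean_shift_def null_variance_def)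
  have wH_eq: "wH i = ?r i" if "i \<in> {N1+1..N}" for i
    using that sigma_pos[of i] \<open>M > 0\<close>
    by (simp add: wH_def mean_shift_def null_variance_def power2_eq_square eval_nat_numeral)
  have S_eq: "S = (\<Sum>i=1..N. ?r i)"
    unfolding S_def sum_nodes_split using wB_eq wH_eq
    by (intro arg_cong2[where f = "(+)"] sum.cong) simp_all
  have \<delta>opt_eq: "\<delta>opt i = ?r i / (\<Sum>i=1..N. ?r i)" if "i \<in> {1..N}" for i
    using that wB_eq[of i] wH_eq[of i] by (auto simp: \<delta>opt_def S_eq)
  have S_nz': "(\<Sum>i=1..N. ?r i) \<noteq> 0" using S_nz S_eq by simp
  have "(\<Sum>i=1..N. \<delta>opt i) = (\<Sum>i=1..N. ?r i / (\<Sum>i=1..N. ?r i))"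
    using \<delta>opt_eq by (rule sum.cong[OF refl])
  also have "\<dots> = 1"
    unfolding sum_divide_distrib[symmetric] using S_nz' by simp
  finally have "(\<Sum>i=1..N. \<delta>opt i) = 1" .
  moreover have "deflection M0 M1 (Lambda0 N N1 Delta Y B \<delta>) (Lambda1 N N1 Delta Y B \<delta>)
      \<le> deflection M0 M1 (Lambda0 N N1 Delta Y B \<delta>opt) (Lambda1 N N1 Delta Y B \<delta>opt)" for \<delta>
  proof -
    have "deflection M0 M1 (Lambda0 N N1 Delta Y B \<delta>) (Lambda1 N N1 Delta Y B \<delta>)
        \<le> (\<Sum>i=1..N. (mean_shift i)\<^sup>2 / null_variance i)"
      unfolding deflection_eq by (rule Cauchy_Schwarz_ratio_le[OF null_variance_pos])
    also have "\<dots> = deflection M0 M1 (Lambda0 N N1 Delta Y B \<delta>opt) (Lambda1 N N1 Delta Y B \<delta>opt)"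
      unfolding deflection_eq
      by (rule Cauchy_Schwarz_ratio_eq[where d = \<delta>opt, OF null_variance_pos S_nz' \<delta>opt_eq, symmetric])
    finally show ?thesis .
  qed
  ultimately show ?thesis by blast
qed

end
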